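(* Let $\varepsilon\neq0$ and let $\mathbf x:\mathbb R\to\mathbb R^3$ be a solution of the $\varepsilon$-revised system $$\dot{\mathbf x}=\mathbf x\times\mathbf m(\mathbf x)+\varepsilon[(\mathbf x\times\mathbf m(\mathbf x))\times\mathbf m(\mathbf x)].$$ Then there exist equilibrium points $\mathbf x_m,\mathbf x_M\in\mathbf E$ such that $$\lim_{t\to-\infty}\mathbf x(t)=\mathbf x_M\quad\text{and}\quad\lim_{t\to+\infty}\mathbf x(t)=\mathbf x_m .$$
   Context: Fix constants $0<a_1<a_2<a_3$ and $a,b,c\in\mathbb R$. Set $\mathbf m(\mathbf x)=(a_1x^1+a,\ a_2x^2+b,\ a_3x^3+c)$; $\times$ is the cross product. $\mathbf E=\{\mathbf x\in\mathbb R^3:\mathbf x\times\mathbf m(\mathbf x)=\mathbf 0\}$ is the set of equilibrium points of the $\varepsilon$-revised system (for $\varepsilon\ne0$). *)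

theory Defs
  imports "HOL-Analysis.Analysis" "HOL-Analysis.Cross3"
begin

definition mvec :: "real \<Rightarrow> real \<Rightarrow> real \<Rightarrow> real \<Rightarrow> real \<Rightarrow> real \<Rightarrow> real^3 \<Rightarrow> real^3" where
  "mvec a1 a2 a3 a b c x = vector [a1 * x$1 + a, a2 * x$2 + b, a3 * x$3 + c]"

definition revised_field ::
  "real \<Rightarrow> real \<Rightarrow> real \<Rightarrow> real \<Rightarrow> real \<Rightarrow> real \<Rightarrow> real \<Rightarrow> real^3 \<Rightarrow> real^3" where
  "revised_field a1 a2 a3 a b c \<epsilon> x =
     cross3 x (mvec a1 a2 a3 a b c x)
     + \<epsilon> *\<^sub>R cross3 (cross3 x (mvec a1 a2 a3 a b c x)) (mvec a1 a2 a3 a b c x)"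

definition equilibria :: "real \<Rightarrow> real \<Rightarrow> real \<Rightarrow> real \<Rightarrow> real \<Rightarrow> real \<Rightarrow> (real^3) set" where
  "equilibria a1 a2 a3 a b c = {x. cross3 x (mvec a1 a2 a3 a b c x) = 0}"

end

theory Submission
  imports Defs "HOL-Computational_Algebra.Polynomial"
begin

text \<open>
  Write m = A x + d with A = diag(a1, a2, a3). Then m is the gradient of the quadratic potential
  V x = (x \<bullet> A x) / 2 + d \<bullet> x, and both terms of the field are orthogonal to m, so V is a first
  integral; as A is positive definite, every orbit is bounded. Moreover the field satisfies
  x \<bullet> x' = - \<epsilon> |x \<times> m|^2, so |x|^2 / (2 \<epsilon>) is a Lyapunov function whose derivative vanishes exactly
  on E. By a LaSalle-type argument the limit points at +\<infinity> lie in the intersection of E with a sphere.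
  Because a1, a2, a3 are distinct, this intersection is finite: an equilibrium x \<noteq> 0 satisfies
  (a_i - \<kappa>) x_i = - d_i for an eigenparameter \<kappa> which is a root of a nonzero polynomial. The tail of
  the orbit is connected and eventually close to this finite set, hence it converges to one of its
  points. Reversing time handles t \<rightarrow> -\<infinity>.
\<close>

section \<open>Convergence under a strict Lyapunov function\<close>

lemma finite_imp_uniformly_separated:
  fixes S :: "'a::metric_space set"
  assumes "finite S"
  obtains e where "e > 0" "\<And>q q'. q \<in> S \<Longrightarrow> q' \<in> S \<Longrightarrow> q \<noteq> q' \<Longrightarrow> 2 * e \<le> dist q q'"
proof -
  obtain \<delta> where \<delta>: "\<And>q. q \<in> S \<Longrightarrow> \<delta> q > 0 \<and> (\<forall>q'\<in>S. q' \<noteq> q \<longrightarrow> \<delta> q \<le> dist q q')"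
    using finite_set_avoid[OF assms] by metis
  define e where "e = Min (insert 1 (\<delta> ` S)) / 2"
  have "e > 0"
    unfolding e_def using assms \<delta> by auto
  moreover have "2 * e \<le> dist q q'" if "q \<in> S" "q' \<in> S" "q \<noteq> q'" for q q'
  proof -
    have "2 * e \<le> \<delta> q"
      unfolding e_def using assms that by simp
    also have "\<dots> \<le> dist q q'"
      using \<delta> that by auto
    finally show ?thesis .
  qed
  ultimately show ?thesis using that by blast
qed

lemma tendsto_point_of_eventually_near_finite_set:
  fixes x :: "real \<Rightarrow> 'a::metric_space"
  assumes cont: "continuous_on UNIV x" and "finite S"
    and near: "\<And>e. e > 0 \<Longrightarrow> \<forall>\<^sub>F t in at_top. \<exists>q\<in>S. dist (x t) q < e"
  shows "\<exists>q\<in>S. (x \<longlongrightarrow> q) at_top"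
proof -
  obtain e where "e > 0" and sep: "\<And>q q'. q \<in> S \<Longrightarrow> q' \<in> S \<Longrightarrow> q \<noteq> q' \<Longrightarrow> 2 * e \<le> dist q q'"
    using finite_imp_uniformly_separated[OF \<open>finite S\<close>] by blast
  have unique: "q = q'" if "q \<in> S" "q' \<in> S" "dist y q < e" "dist y q' < e" for y q q'
    using sep[OF that(1,2)] dist_triangle3[of q q' y] that(3,4) by force
  obtain T where T: "\<And>t. t \<ge> T \<Longrightarrow> \<exists>q\<in>S. dist (x t) q < e"
    using near[OF \<open>e > 0\<close>] by (auto simp: eventually_at_top_linorder)
  then obtain q0 where "q0 \<in> S" "dist (x T) q0 < e"
    by blast
  have tail: "x ` {T..} \<subseteq> ball q0 e"
  proof -
    let ?U = "\<Union>q\<in>S - {q0}. ball q e"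
    have "connected (x ` {T..})"
      using cont by (intro connected_continuous_image connected_Ici) (auto intro: continuous_on_subset)
    moreover have cover: "x ` {T..} \<subseteq> ball q0 e \<union> ?U"
      using T by (fastforce simp: dist_commute)
    moreover have "ball q0 e \<inter> ?U = {}"
      using unique \<open>q0 \<in> S\<close> by (fastforce simp: dist_commute)
    moreover have "x T \<in> ball q0 e \<inter> x ` {T..}"
      using \<open>dist (x T) q0 < e\<close> by (simp add: dist_commute)
    ultimately have "?U \<inter> x ` {T..} = {}"
      using connectedD[of "x ` {T..}" "ball q0 e" ?U] by blast
    with cover show ?thesis
      by blast
  qed
  have "(x \<longlongrightarrow> q0) at_top"
  proof (rule tendstoI)
    fix \<eta> :: real
    assume "\<eta> > 0"
    have "\<forall>\<^sub>F t in at_top. (\<exists>q\<in>S. dist (x t) q < min \<eta> e) \<and> t \<ge> T"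
      using near[of "min \<eta> e"] \<open>\<eta> > 0\<close> \<open>e > 0\<close> by (auto intro: eventually_conj eventually_ge_at_top)
    then show "\<forall>\<^sub>F t in at_top. dist (x t) q0 < \<eta>"
      by eventually_elim (use tail unique \<open>q0 \<in> S\<close> in \<open>fastforce simp: dist_commute\<close>)
  qed
  with \<open>q0 \<in> S\<close> show ?thesis by blast
qed

lemma uniformly_continuous_if_bounded_vector_derivative:
  fixes x :: "real \<Rightarrow> 'a::real_normed_vector"
  assumes "\<And>t. (x has_vector_derivative x' t) (at t)" and "\<And>t. norm (x' t) \<le> M"
  shows "uniformly_continuous_on UNIV x"
proof -
  have "0 \<le> M"
    using assms(2) norm_ge_zero order_trans by blast
  with assms have "M-lipschitz_on UNIV x"
    by (intro bounded_derivative_imp_lipschitz[where f'="\<lambda>t h. h *\<^sub>R x' t"])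
      (auto simp: has_vector_derivative_def intro!: onorm_le, metis abs_ge_zero mult.commute mult_right_mono)
  then show ?thesis
    by (rule lipschitz_on_uniformly_continuous)
qed

lemma tendsto_Inf_at_top_if_nonincreasing:
  fixes f :: "real \<Rightarrow> real"
  assumes mono: "\<And>s t. s \<le> t \<Longrightarrow> f t \<le> f s" and bdd: "bdd_below (range f)"
  shows "(f \<longlongrightarrow> Inf (range f)) at_top"
proof (rule decreasing_tendsto)
  show "\<forall>\<^sub>F t in at_top. Inf (range f) \<le> f t"
    using bdd by (simp add: cInf_lower)
  fix y
  assume "Inf (range f) < y"
  then obtain t0 where "f t0 < y"
    using cInf_less_iff[OF _ bdd] by auto
  then show "\<forall>\<^sub>F t in at_top. f t < y"
    using mono eventually_ge_at_top[of t0] by (metis (mono_tags, lifting) eventually_mono le_less_trans)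
qed

lemma dissipation_vanishes_at_limit_point:
  fixes x :: "real \<Rightarrow> 'a::metric_space"
  assumes ucont: "uniformly_continuous_on UNIV x"
    and W': "\<And>t. ((\<lambda>t. W (x t)) has_real_derivative - \<phi> (x t)) (at t)"
    and W_lim: "((\<lambda>t. W (x t)) \<longlongrightarrow> L) at_top"
    and "isCont \<phi> p"
    and t: "filterlim t at_top sequentially" and xt: "(\<lambda>n. x (t n)) \<longlonglongrightarrow> p"
  shows "\<phi> p = 0"
proof (rule ccontr)
  txt \<open>Otherwise, on a time window of fixed length h after each t n the trajectory stays where
    \<bar>\<phi>\<bar> > \<delta>, so W changes by more than h \<delta> there, although it converges.\<close>
  assume "\<phi> p \<noteq> 0"
  define \<delta> where "\<delta> = \<bar>\<phi> p\<bar> / 2"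
  have "\<delta> > 0"
    using \<open>\<phi> p \<noteq> 0\<close> by (simp add: \<delta>_def)
  then obtain \<rho> where "\<rho> > 0" and \<rho>: "\<And>y. dist y p < \<rho> \<Longrightarrow> dist (\<phi> y) (\<phi> p) < \<delta>"
    using \<open>isCont \<phi> p\<close> unfolding continuous_at_eps_delta by blast
  have \<phi>_large: "\<delta> < \<bar>\<phi> y\<bar>" if "dist y p < \<rho>" for y
    using \<rho>[OF that] unfolding \<delta>_def dist_real_def by linarith
  obtain h where "h > 0" and h: "\<And>s s'. dist s s' \<le> h \<Longrightarrow> dist (x s) (x s') < \<rho> / 2"
    using ucont \<open>\<rho> > 0\<close> unfolding uniformly_continuous_on_def
    by (metis UNIV_I field_lbound_gt_zero half_gt_zero le_less_trans)
  have drop: "h * \<delta> < \<bar>W (x (t n + h)) - W (x (t n))\<bar>" if "dist (x (t n)) p < \<rho> / 2" for n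
  proof -
    obtain \<xi> where "t n < \<xi>" "\<xi> < t n + h" and mvt: "W (x (t n + h)) - W (x (t n)) = h * - \<phi> (x \<xi>)"
      using MVT2[of "t n" "t n + h" "\<lambda>s. W (x s)" "\<lambda>s. - \<phi> (x s)"] W' \<open>h > 0\<close> by auto
    then have "dist (x \<xi>) (x (t n)) < \<rho> / 2"
      by (intro h) (simp add: dist_real_def)
    with that have "dist (x \<xi>) p < \<rho>"
      using dist_triangle_half_l[of "x \<xi>" "x (t n)" \<rho> p] by (simp add: dist_commute)
    then show ?thesis
      using \<phi>_large \<open>h > 0\<close> by (simp add: mvt abs_mult)
  qed
  have "filterlim (\<lambda>n. t n + h) at_top sequentially"
    using filterlim_tendsto_add_at_top[OF tendsto_const t] by (simp add: add.commute)
  then have "(\<lambda>n. W (x (t n + h)) - W (x (t n))) \<longlonglongrightarrow> L - L"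
    using filterlim_compose[OF W_lim] t by (intro tendsto_diff) auto
  then have "\<forall>\<^sub>F n in sequentially. \<bar>W (x (t n + h)) - W (x (t n))\<bar> < h * \<delta>"
    using \<open>h > 0\<close> \<open>\<delta> > 0\<close> by (auto simp: tendsto_iff dist_real_def)
  moreover have "\<forall>\<^sub>F n in sequentially. dist (x (t n)) p < \<rho> / 2"
    by (rule tendstoD[OF xt]) (use \<open>\<rho> > 0\<close> in simp)
  ultimately have "\<forall>\<^sub>F n in sequentially. False"
    by eventually_elim (use drop in fastforce)
  then show False
    by simp
qed

lemma eventually_near_sequential_limit_points:
  fixes x :: "real \<Rightarrow> 'a::metric_space"
  assumes "compact K" and "\<And>t. x t \<in> K"
    and lim: "\<And>t p. filterlim t at_top sequentially \<Longrightarrow> (\<lambda>n. x (t n)) \<longlonglongrightarrow> p \<Longrightarrow> p \<in> S"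
    and "e > 0"
  shows "\<forall>\<^sub>F s in at_top. \<exists>q\<in>S. dist (x s) q < e"
proof (rule ccontr)
  assume "\<not> ?thesis"
  then have "\<forall>n::nat. \<exists>s\<ge>real n. \<forall>q\<in>S. e \<le> dist (x s) q"
    unfolding eventually_at_top_linorder by (meson not_le)
  then obtain t where t_ge: "\<And>n. t n \<ge> real n" and far: "\<And>n q. q \<in> S \<Longrightarrow> e \<le> dist (x (t n)) q"
    by metis
  have t: "filterlim t at_top sequentially"
    by (rule filterlim_at_top_mono[OF filterlim_real_sequentially]) (use t_ge in auto)
  obtain r p where "strict_mono r" and conv: "(\<lambda>n. x (t (r n))) \<longlonglongrightarrow> p"
    using seq_compactE[OF compact_imp_seq_compact[OF \<open>compact K\<close>], of "\<lambda>n. x (t n)"] \<open>\<And>t. x t \<in> K\<close>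
    unfolding comp_def by blast
  moreover have "filterlim (\<lambda>n. t (r n)) at_top sequentially"
    using filterlim_compose[OF t filterlim_subseq[OF \<open>strict_mono r\<close>]] .
  ultimately have "p \<in> S"
    using lim by blast
  then show False
    using conv \<open>e > 0\<close> far[of p] unfolding tendsto_iff by (meson eventually_sequentially order.refl not_le)
qed

lemma lyapunov_finite_levels_imp_tendsto:
  fixes x :: "real \<Rightarrow> 'a::{real_normed_vector,heine_borel}"
  assumes x': "\<And>t. (x has_vector_derivative F (x t)) (at t)" and "continuous_on UNIV F"
    and "bounded (range x)"
    and "continuous_on UNIV W" and "continuous_on UNIV \<phi>" and "\<And>y. 0 \<le> \<phi> y"
    and W': "\<And>t. ((\<lambda>t. W (x t)) has_real_derivative - \<phi> (x t)) (at t)"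
    and fin: "\<And>l. finite {p. \<phi> p = 0 \<and> W p = l}"
  shows "\<exists>q. \<phi> q = 0 \<and> (x \<longlongrightarrow> q) at_top"
proof -
  define K where "K = closure (range x)"
  have "compact K" and xK: "\<And>t. x t \<in> K"
    using \<open>bounded (range x)\<close> by (auto simp: K_def compact_closure closure_subset[THEN subsetD])
  have "compact (F ` K)" "compact (W ` K)"
    using \<open>compact K\<close> assms(2,4) by (auto intro: compact_continuous_image continuous_on_subset)
  then obtain M where F_bound: "\<And>y. y \<in> K \<Longrightarrow> norm (F y) \<le> M" and "bdd_below (W ` K)"
    unfolding bounded_iff by (metis compact_imp_bounded bounded_iff bounded_imp_bdd_below imageI)
  have ucont: "uniformly_continuous_on UNIV x"
    using x' by (rule uniformly_continuous_if_bounded_vector_derivative) (use xK F_bound in blast)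
  have "bdd_below (range (\<lambda>t. W (x t)))"
    by (rule bdd_below_mono[OF \<open>bdd_below (W ` K)\<close>]) (use xK in auto)
  moreover have "W (x t) \<le> W (x s)" if "s \<le> t" for s t
    by (rule DERIV_nonpos_imp_nonincreasing[OF that]) (use W' \<open>\<And>y. 0 \<le> \<phi> y\<close> in \<open>metis neg_le_0_iff_le\<close>)
  ultimately obtain L where W_lim: "((\<lambda>t. W (x t)) \<longlongrightarrow> L) at_top"
    using tendsto_Inf_at_top_if_nonincreasing[of "\<lambda>t. W (x t)"] by blast
  define S where "S = {p. \<phi> p = 0 \<and> W p = L}"
  have limit_in_S: "p \<in> S" if t: "filterlim t at_top sequentially" and xt: "(\<lambda>n. x (t n)) \<longlonglongrightarrow> p" for t p
  proof -
    have "(\<lambda>n. W (x (t n))) \<longlonglongrightarrow> W p"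
      using continuous_on_tendsto_compose[OF \<open>continuous_on UNIV W\<close> xt] by simp
    then have "W p = L"
      using LIMSEQ_unique filterlim_compose[OF W_lim t] by blast
    moreover have "\<phi> p = 0"
      using dissipation_vanishes_at_limit_point[OF ucont W' W_lim _ t xt] \<open>continuous_on UNIV \<phi>\<close>
      by (simp add: continuous_on_eq_continuous_at)
    ultimately show ?thesis
      by (simp add: S_def)
  qed
  have "continuous_on UNIV x"
    using x' by (meson continuous_at_imp_continuous_on has_vector_derivative_continuous)
  moreover have "\<And>e. e > 0 \<Longrightarrow> \<forall>\<^sub>F s in at_top. \<exists>q\<in>S. dist (x s) q < e"
    by (rule eventually_near_sequential_limit_points[OF \<open>compact K\<close> xK limit_in_S])
  ultimately obtain q where "q \<in> S" "(x \<longlongrightarrow> q) at_top"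
    using tendsto_point_of_eventually_near_finite_set fin[of L, folded S_def] by blast
  then show ?thesis
    unfolding S_def by blast
qed

section \<open>Diagonal affine fields\<close>

definition diag_affine :: "('n::finite \<Rightarrow> real) \<Rightarrow> real^'n \<Rightarrow> real^'n \<Rightarrow> real^'n" where
  "diag_affine \<alpha> d z = (\<chi> i. \<alpha> i * z$i + d$i)"

definition diag_potential :: "('n::finite \<Rightarrow> real) \<Rightarrow> real^'n \<Rightarrow> real^'n \<Rightarrow> real" where
  "diag_potential \<alpha> d z = (\<Sum>i\<in>UNIV. \<alpha> i * (z$i)\<^sup>2 / 2 + d$i * z$i)"

lemma power2_norm_vec: "(norm (z :: real^'n))\<^sup>2 = (\<Sum>i\<in>UNIV. (z$i)\<^sup>2)"
  unfolding power2_norm_eq_inner by (simp add: inner_vec_def power2_eq_square)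

lemma continuous_on_diag_affine: "continuous_on UNIV (diag_affine \<alpha> d)"
  unfolding diag_affine_def by (intro continuous_on_vec_lambda continuous_intros)

lemma has_real_derivative_diag_potential:
  assumes "(y has_vector_derivative D) (at t)"
  shows "((\<lambda>t. diag_potential \<alpha> d (y t)) has_real_derivative diag_affine \<alpha> d (y t) \<bullet> D) (at t)"
proof -
  have "((\<lambda>t. y t $ i) has_real_derivative D $ i) (at t)" for i
    using bounded_linear.has_derivative[OF bounded_linear_vec_nth assms[unfolded has_vector_derivative_def]]
    unfolding has_field_derivative_def by (rule has_derivative_eq_rhs) auto
  then show ?thesis
    unfolding diag_potential_def diag_affine_def inner_vec_def
    by (auto intro!: derivative_eq_intros sum.cong simp: algebra_simps)
qed

lemma bounded_diag_potential_sublevel: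
  assumes "\<And>i. 0 < \<alpha> i"
  shows "bounded {z. diag_potential \<alpha> d z \<le> c}"
proof -
  define \<mu> where "\<mu> = Min (range \<alpha>)"
  have "0 < \<mu>" "\<And>i. \<mu> \<le> \<alpha> i"
    using assms by (auto simp: \<mu>_def)
  define B where "B = 2 * \<bar>c\<bar> + 2 * norm d"
  have "norm z \<le> max 1 (B / \<mu>)" if "diag_potential \<alpha> d z \<le> c" for z
  proof -
    have "\<mu> * (norm z)\<^sup>2 \<le> (\<Sum>i\<in>UNIV. \<alpha> i * (z$i)\<^sup>2)"
      unfolding power2_norm_vec sum_distrib_left using \<open>\<And>i. \<mu> \<le> \<alpha> i\<close> by (intro sum_mono mult_right_mono) auto
    also have "\<dots> = 2 * diag_potential \<alpha> d z - 2 * (d \<bullet> z)"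
      by (simp add: diag_potential_def inner_vec_def sum.distrib sum_divide_distrib[symmetric] algebra_simps)
    also have "\<dots> \<le> 2 * \<bar>c\<bar> + 2 * norm d * norm z"
      using that Cauchy_Schwarz_ineq2[of d z] abs_ge_self[of c] abs_ge_minus_self[of "d \<bullet> z"] by linarith
    finally have main: "\<mu> * (norm z)\<^sup>2 \<le> 2 * \<bar>c\<bar> + 2 * norm d * norm z" .
    show ?thesis
    proof (cases "norm z \<le> 1")
      case False
      then have "2 * \<bar>c\<bar> \<le> 2 * \<bar>c\<bar> * norm z"
        using mult_left_mono[of 1 "norm z" "2 * \<bar>c\<bar>"] by simp
      with main have "(\<mu> * norm z) * norm z \<le> B * norm z"
        unfolding B_def power2_eq_square by (simp add: algebra_simps)
      then have "\<mu> * norm z \<le> B"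
        by (rule mult_right_le_imp_le) (use False in auto)
      then have "norm z \<le> B / \<mu>"
        using \<open>0 < \<mu>\<close> by (simp add: pos_le_divide_eq mult.commute)
      then show ?thesis
        by simp
    qed simp
  qed
  then show ?thesis
    unfolding bounded_iff by blast
qed

lemma diag_affine_eq_scaleR_iff:
  "diag_affine \<alpha> d p = \<kappa> *\<^sub>R p \<longleftrightarrow> (\<forall>i. (\<alpha> i - \<kappa>) * p$i = - d$i)"
  by (auto simp: diag_affine_def vec_eq_iff algebra_simps)

lemma sphere_eigen_identity:
  fixes p :: "real^'n"
  assumes eig: "\<And>i. (\<alpha> i - \<kappa>) * p$i = - d$i" and "(norm p)\<^sup>2 = R"
  shows "R * (\<Prod>j\<in>UNIV. (\<alpha> j - \<kappa>)\<^sup>2) = (\<Sum>i\<in>UNIV. (d$i)\<^sup>2 * (\<Prod>j\<in>UNIV - {i}. (\<alpha> j - \<kappa>)\<^sup>2))"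
proof -
  have summand: "(p$i)\<^sup>2 * (\<Prod>j\<in>UNIV. (\<alpha> j - \<kappa>)\<^sup>2) = (d$i)\<^sup>2 * (\<Prod>j\<in>UNIV - {i}. (\<alpha> j - \<kappa>)\<^sup>2)" for i
  proof -
    have "(d$i)\<^sup>2 = (p$i)\<^sup>2 * (\<alpha> i - \<kappa>)\<^sup>2"
      using eig[of i] by (metis power2_minus power_mult_distrib mult.commute)
    then show ?thesis
      by (simp add: prod.remove[of UNIV i])
  qed
  have "R * (\<Prod>j\<in>UNIV. (\<alpha> j - \<kappa>)\<^sup>2) = (\<Sum>i\<in>UNIV. (p$i)\<^sup>2 * (\<Prod>j\<in>UNIV. (\<alpha> j - \<kappa>)\<^sup>2))"
    using \<open>(norm p)\<^sup>2 = R\<close> by (simp add: power2_norm_vec flip: sum_distrib_right)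
  also have "\<dots> = (\<Sum>i\<in>UNIV. (d$i)\<^sup>2 * (\<Prod>j\<in>UNIV - {i}. (\<alpha> j - \<kappa>)\<^sup>2))"
    using summand by simp
  finally show ?thesis .
qed

lemma finite_eigenparameters_on_sphere:
  fixes \<alpha> :: "'n::finite \<Rightarrow> real"
  assumes "inj \<alpha>" and "R \<noteq> 0"
  shows "finite {\<kappa>. \<exists>p. diag_affine \<alpha> d p = \<kappa> *\<^sub>R p \<and> (norm p)\<^sup>2 = R}"
proof -
  txt \<open>Clearing denominators in \<Sum>i. (d_i / (\<alpha> i - \<kappa>))^2 = R; evaluating at \<alpha> k shows that P = 0
    forces d = 0, and then P does not vanish outside the range of \<alpha>.\<close>
  define P where "P = smult R (\<Prod>j\<in>UNIV. [:\<alpha> j, -1:]\<^sup>2)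
    - (\<Sum>i\<in>UNIV. smult ((d$i)\<^sup>2) (\<Prod>j\<in>UNIV - {i}. [:\<alpha> j, -1:]\<^sup>2))"
  have poly_P: "poly P \<kappa> = R * (\<Prod>j\<in>UNIV. (\<alpha> j - \<kappa>)\<^sup>2)
    - (\<Sum>i\<in>UNIV. (d$i)\<^sup>2 * (\<Prod>j\<in>UNIV - {i}. (\<alpha> j - \<kappa>)\<^sup>2))" for \<kappa>
    by (simp add: P_def poly_sum poly_prod)
  have "d$k = 0" if "P = 0" for k
  proof -
    have vanish: "(\<Prod>j\<in>A. (\<alpha> j - \<alpha> k)\<^sup>2) = 0" if "k \<in> A" for A
      using that by (auto simp: prod_zero_iff)
    have "(\<Prod>j\<in>UNIV - {k}. (\<alpha> j - \<alpha> k)\<^sup>2) \<noteq> 0"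
      using \<open>inj \<alpha>\<close> by (simp add: prod_zero_iff inj_eq)
    moreover have "poly P (\<alpha> k) = - (d$k)\<^sup>2 * (\<Prod>j\<in>UNIV - {k}. (\<alpha> j - \<alpha> k)\<^sup>2)"
      unfolding poly_P by (simp add: vanish sum.remove[of UNIV k])
    ultimately show ?thesis
      using \<open>P = 0\<close> by simp
  qed
  moreover obtain \<kappa>0 where "\<kappa>0 \<notin> range \<alpha>"
    using ex_new_if_finite[OF infinite_UNIV_char_0, of "range \<alpha>"] by auto
  then have "(\<Prod>j\<in>UNIV. (\<alpha> j - \<kappa>0)\<^sup>2) \<noteq> 0"
    by auto
  ultimately have "P \<noteq> 0"
    using poly_P[of \<kappa>0] \<open>R \<noteq> 0\<close> by auto
  moreover have "poly P \<kappa> = 0" if "diag_affine \<alpha> d p = \<kappa> *\<^sub>R p" and "(norm p)\<^sup>2 = R" for \<kappa> p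
    using sphere_eigen_identity[of \<alpha> \<kappa> p d R] that by (simp add: poly_P diag_affine_eq_scaleR_iff)
  then have "{\<kappa>. \<exists>p. diag_affine \<alpha> d p = \<kappa> *\<^sub>R p \<and> (norm p)\<^sup>2 = R} \<subseteq> {\<kappa>. poly P \<kappa> = 0}"
    by blast
  ultimately show ?thesis
    using poly_roots_finite finite_subset by blast
qed

lemma finite_real_square_roots: "finite {y::real. y\<^sup>2 = c}"
proof -
  have "{y::real. y\<^sup>2 = c} = {y. poly [:- c, 0, 1:] y = 0}"
    by (auto simp: power2_eq_square)
  then show ?thesis
    using poly_roots_finite[of "[:- c, 0, 1:]"] by simp
qed

lemma finite_vec_components_in:
  assumes "\<And>i. finite (T i)"
  shows "finite {p :: 'a^'n. \<forall>i. p$i \<in> T i}"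
proof -
  have "vec_nth ` {p. \<forall>i. p$i \<in> T i} \<subseteq> Pi\<^sub>E UNIV T"
    by auto
  then have "finite (vec_nth ` {p :: 'a^'n. \<forall>i. p$i \<in> T i})"
    by (rule finite_subset) (simp add: finite_PiE assms)
  then show ?thesis
    by (rule finite_imageD) (simp add: inj_on_def vec_nth_inject)
qed

lemma diag_eigenvector_coordinate:
  fixes \<alpha> :: "'n::finite \<Rightarrow> real"
  assumes "inj \<alpha>" and eig: "diag_affine \<alpha> d p = \<kappa> *\<^sub>R p" and norm: "(norm p)\<^sup>2 = R"
  shows "p$i = - d$i / (\<alpha> i - \<kappa>) \<or> (p$i)\<^sup>2 = R - (\<Sum>j\<in>UNIV - {i}. (d$j / (\<alpha> j - \<kappa>))\<^sup>2)"
proof -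
  have coord: "p$j = - d$j / (\<alpha> j - \<kappa>)" if "\<alpha> j \<noteq> \<kappa>" for j
  proof -
    have "(\<alpha> j - \<kappa>) * p$j = - d$j" and "\<alpha> j - \<kappa> \<noteq> 0"
      using eig that by (auto simp: diag_affine_eq_scaleR_iff)
    then show ?thesis
      by (simp add: field_simps)
  qed
  show ?thesis
  proof (cases "\<alpha> i = \<kappa>")
    case True
    then have "\<alpha> j \<noteq> \<kappa>" if "j \<noteq> i" for j
      using \<open>inj \<alpha>\<close> that by (metis inj_eq)
    then have "(p$j)\<^sup>2 = (d$j / (\<alpha> j - \<kappa>))\<^sup>2" if "j \<in> UNIV - {i}" for j
      using coord that by (simp add: power_divide)
    then have "R = (p$i)\<^sup>2 + (\<Sum>j\<in>UNIV - {i}. (d$j / (\<alpha> j - \<kappa>))\<^sup>2)"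
      using norm by (simp add: power2_norm_vec sum.remove[of UNIV i])
    then show ?thesis
      by simp
  next
    case False
    then show ?thesis
      using coord by blast
  qed
qed

lemma finite_eigenvectors_on_sphere:
  fixes \<alpha> :: "'n::finite \<Rightarrow> real"
  assumes "inj \<alpha>"
  shows "finite {p. (\<exists>\<kappa>. diag_affine \<alpha> d p = \<kappa> *\<^sub>R p) \<and> (norm p)\<^sup>2 = R}"
proof (cases "R = 0")
  case True
  then have "{p. (\<exists>\<kappa>. diag_affine \<alpha> d p = \<kappa> *\<^sub>R p) \<and> (norm p)\<^sup>2 = R} \<subseteq> {0}"
    by auto
  then show ?thesis
    by (rule finite_subset) simp
next
  case False
  define K where "K = {\<kappa>. \<exists>p. diag_affine \<alpha> d p = \<kappa> *\<^sub>R p \<and> (norm p)\<^sup>2 = R}"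
  define T where "T i = (\<Union>\<kappa>\<in>K. {- d$i / (\<alpha> i - \<kappa>)} \<union> {y. y\<^sup>2 = R - (\<Sum>j\<in>UNIV - {i}. (d$j / (\<alpha> j - \<kappa>))\<^sup>2)})"
    for i
  have "finite (T i)" for i
    using finite_eigenparameters_on_sphere[OF assms False] finite_real_square_roots
    by (simp add: T_def K_def)
  moreover have "p$i \<in> T i" if "diag_affine \<alpha> d p = \<kappa> *\<^sub>R p" and "(norm p)\<^sup>2 = R" for p \<kappa> i
    using diag_eigenvector_coordinate[OF assms that, of i] that by (auto simp: T_def K_def)
  ultimately show ?thesis
    by (blast intro: finite_subset[OF _ finite_vec_components_in[of T]])
qed

lemma cross3_eq_0_imp_parallel:
  assumes "cross3 p m = 0"
  shows "p = 0 \<or> (\<exists>\<kappa>. m = \<kappa> *\<^sub>R p)"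
  using assms cross_eq_0 collinear_lemma by (metis scale_zero_left)

lemma finite_diag_equilibria_on_sphere:
  fixes \<alpha> :: "3 \<Rightarrow> real"
  assumes "inj \<alpha>"
  shows "finite {p. cross3 p (diag_affine \<alpha> d p) = 0 \<and> (norm p)\<^sup>2 = R}"
proof -
  have "{p. cross3 p (diag_affine \<alpha> d p) = 0 \<and> (norm p)\<^sup>2 = R}
    \<subseteq> insert 0 {p. (\<exists>\<kappa>. diag_affine \<alpha> d p = \<kappa> *\<^sub>R p) \<and> (norm p)\<^sup>2 = R}"
    using cross3_eq_0_imp_parallel by blast
  then show ?thesis
    using finite_eigenvectors_on_sphere[OF assms] finite_subset by blast
qed

section \<open>The revised system\<close>

definition double_cross_field :: "real \<Rightarrow> real \<Rightarrow> (real^3 \<Rightarrow> real^3) \<Rightarrow> real^3 \<Rightarrow> real^3" where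
  "double_cross_field u v m z = u *\<^sub>R cross3 z (m z) + v *\<^sub>R cross3 (cross3 z (m z)) (m z)"

lemma inner_cross3_cross3: "p \<bullet> cross3 (cross3 p m) m = - (norm (cross3 p m))\<^sup>2"
  unfolding power2_norm_eq_inner by (simp add: cross3_simps power2_eq_square)

lemma has_real_derivative_power2_norm:
  assumes "(y has_vector_derivative D) (at t)"
  shows "((\<lambda>t. (norm (y t))\<^sup>2) has_real_derivative 2 * (y t \<bullet> D)) (at t)"
proof -
  have "((\<lambda>t. y t \<bullet> y t) has_derivative (\<lambda>h. y t \<bullet> (h *\<^sub>R D) + (h *\<^sub>R D) \<bullet> y t)) (at t)"
    using has_derivative_inner[OF assms[unfolded has_vector_derivative_def] assms[unfolded has_vector_derivative_def]] .
  then show ?thesis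
    unfolding has_field_derivative_def power2_norm_eq_inner
    by (rule has_derivative_eq_rhs) (auto simp: inner_commute)
qed

lemma double_cross_flow_tendsto_equilibrium:
  fixes x :: "real \<Rightarrow> real^3" and \<alpha> :: "3 \<Rightarrow> real"
  assumes "inj \<alpha>" and "\<And>i. 0 < \<alpha> i" and "v \<noteq> 0"
    and x': "\<And>t. (x has_vector_derivative double_cross_field u v (diag_affine \<alpha> d) (x t)) (at t)"
  shows "\<exists>q. cross3 q (diag_affine \<alpha> d q) = 0 \<and> (x \<longlongrightarrow> q) at_top"
proof -
  let ?m = "diag_affine \<alpha> d"
  have "((\<lambda>t. diag_potential \<alpha> d (x t)) has_real_derivative 0) (at t)" for t
    using has_real_derivative_diag_potential[OF x'[of t], of \<alpha> d]
    by (simp add: double_cross_field_def inner_add_right dot_cross_self)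
  then have "diag_potential \<alpha> d (x t) = diag_potential \<alpha> d (x 0)" for t
    using DERIV_isconst_all by blast
  then have "bounded (range x)"
    using bounded_diag_potential_sublevel[where \<alpha> = \<alpha> and d = d and c = "diag_potential \<alpha> d (x 0)"] \<open>\<And>i. 0 < \<alpha> i\<close>
    by (metis (mono_tags, lifting) bounded_subset image_subsetI mem_Collect_eq order_refl)
  define W where "W z = (norm z)\<^sup>2 / (2 * v)" for z :: "real^3"
  define \<phi> where "\<phi> z = (norm (cross3 z (?m z)))\<^sup>2" for z
  have W': "((\<lambda>t. W (x t)) has_real_derivative - \<phi> (x t)) (at t)" for t
  proof -
    have "x t \<bullet> double_cross_field u v ?m (x t) = - v * \<phi> (x t)"
      by (simp add: double_cross_field_def \<phi>_def inner_add_right dot_cross_self inner_cross3_cross3)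
    then show ?thesis
      using DERIV_cdivide[OF has_real_derivative_power2_norm[OF x'[of t]], of "2 * v"] \<open>v \<noteq> 0\<close>
      by (simp add: W_def)
  qed
  have "finite {p. \<phi> p = 0 \<and> W p = l}" for l
  proof -
    have "{p. \<phi> p = 0 \<and> W p = l} \<subseteq> {p. cross3 p (?m p) = 0 \<and> (norm p)\<^sup>2 = 2 * v * l}"
      using \<open>v \<noteq> 0\<close> by (auto simp: \<phi>_def W_def field_simps)
    then show ?thesis
      using finite_diag_equilibria_on_sphere[OF \<open>inj \<alpha>\<close>] finite_subset by blast
  qed
  moreover have "continuous_on UNIV (double_cross_field u v ?m)"
    unfolding double_cross_field_def by (intro continuous_intros continuous_on_cross continuous_on_diag_affine)
  moreover have "continuous_on UNIV W"
    unfolding W_def using \<open>v \<noteq> 0\<close> by (intro continuous_intros) auto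
  moreover have "continuous_on UNIV \<phi>"
    unfolding \<phi>_def by (intro continuous_intros continuous_on_cross continuous_on_diag_affine)
  ultimately obtain q where "\<phi> q = 0" "(x \<longlongrightarrow> q) at_top"
    using lyapunov_finite_levels_imp_tendsto[OF x' _ \<open>bounded (range x)\<close> _ _ _ W'] \<phi>_def by force
  then show ?thesis
    unfolding \<phi>_def by auto
qed

lemma has_vector_derivative_reversed_time:
  assumes "\<And>t. (x has_vector_derivative F (x t)) (at t)"
  shows "((\<lambda>t. x (- t)) has_vector_derivative - F (x (- t))) (at t)"
proof -
  have "((\<lambda>t. - t) has_vector_derivative -1) (at t)"
    using has_real_derivative_iff_has_vector_derivative by (auto intro!: derivative_eq_intros)
  from vector_diff_chain_at[OF this assms]
  show ?thesis
    by (simp add: comp_def)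
qed

lemma mvec_eq_diag_affine:
  "mvec a1 a2 a3 a b c = diag_affine (vec_nth (vector [a1, a2, a3])) (vector [a, b, c])"
  by (simp add: fun_eq_iff vec_eq_iff forall_3 mvec_def diag_affine_def)

theorem theorem5p2:
  fixes a1 a2 a3 a b c \<epsilon> :: real and x :: "real \<Rightarrow> real^3"
  assumes "0 < a1" "a1 < a2" "a2 < a3"
    and "\<epsilon> \<noteq> 0"
    and "\<forall>t. (x has_vector_derivative revised_field a1 a2 a3 a b c \<epsilon> (x t)) (at t)"
  shows "\<exists>xm xM. xm \<in> equilibria a1 a2 a3 a b c \<and> xM \<in> equilibria a1 a2 a3 a b c \<and>
           (x \<longlongrightarrow> xM) at_bot \<and> (x \<longlongrightarrow> xm) at_top"
proof -
  define \<alpha> where "\<alpha> = vec_nth (vector [a1, a2, a3] :: real^3)"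
  define d where "d = (vector [a, b, c] :: real^3)"
  have mvec: "mvec a1 a2 a3 a b c = diag_affine \<alpha> d"
    unfolding \<alpha>_def d_def by (rule mvec_eq_diag_affine)
  have "inj \<alpha>"
    using assms(1-3) by (auto simp: \<alpha>_def inj_def forall_3)
  have pos: "0 < \<alpha> i" for i
    using assms(1-3) exhaust_3[of i] by (auto simp: \<alpha>_def)
  have forward: "\<And>t. (x has_vector_derivative double_cross_field 1 \<epsilon> (diag_affine \<alpha> d) (x t)) (at t)"
    using assms(5) by (simp add: revised_field_def double_cross_field_def mvec)
  have backward:
    "\<And>t. ((\<lambda>t. x (- t)) has_vector_derivative double_cross_field (- 1) (- \<epsilon>) (diag_affine \<alpha> d) (x (- t))) (at t)"
    using has_vector_derivative_reversed_time[OF forward] by (simp add: double_cross_field_def)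
  obtain xm where "cross3 xm (diag_affine \<alpha> d xm) = 0" "(x \<longlongrightarrow> xm) at_top"
    using double_cross_flow_tendsto_equilibrium[OF \<open>inj \<alpha>\<close> pos \<open>\<epsilon> \<noteq> 0\<close> forward] by blast
  moreover obtain xM where "cross3 xM (diag_affine \<alpha> d xM) = 0" "((\<lambda>t. x (- t)) \<longlongrightarrow> xM) at_top"
    using double_cross_flow_tendsto_equilibrium[OF \<open>inj \<alpha>\<close> pos _ backward] \<open>\<epsilon> \<noteq> 0\<close> by auto
  ultimately show ?thesis
    unfolding equilibria_def mvec using filterlim_at_bot_mirror by blast
qed

end
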